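(* Let $\xi$ be any DoS sequence. Then $$\mathcal{D}^{\circ}(\xi) = (\inf \mathcal{D}(\xi), 1) \quad\text{and}\quad \mathcal{F}^{\circ}(\xi) = (\inf \mathcal{F}(\xi), +\infty),$$ where $\Omega^{\circ}$ denotes the interior of a set $\Omega$.
   Context: A DoS sequence $\xi=\{H_n\}$ is a finite or infinite sequence of sets $H_n := \{h_n\}\cup[h_n,h_n+\tau_n)$, where $h_1\geqslant 0$, $\tau_n\geqslant 0$ and $h_{n+1} > h_n+\tau_n$ for all $n$ (so the $H_n$ are pairwise disjoint). If $\xi$ has only $m$ elements, the convention $h_{m+1}=h_{m+1}+\tau_{m+1}=+\infty$ is used. For $0\leqslant \tau\leqslant s$ let $\Xi(\tau,s) := \bigcup_n H_n\cap[\tau,s]$ and $n_\xi(\tau,s) := \operatorname{card}(\{h_n\}_n\cap[\tau,s])$; $\lvert\cdot\rvert$ denotes Lebesgue measure. A constant $B_d\in[0,1]$ is a duration-bound of $\xi$ if there is a constant $0<\kappa<+\infty$ with $\lvert \Xi(0,t)\rvert\leqslant \kappa + B_d t$ for all $t\geqslant 0$. A constant $B_f\in[0,+\infty)$ is a frequency-bound of $\xi$ if there is an integer $0<\Lambda<+\infty$ with $n_\xi(0,t)\leqslant \Lambda + B_f t$ for all $t\geqslant 0$; if no such finite $B_f$ exists, the frequency-bound of $\xi$ is defined to be $B_f=+\infty$. $\mathcal{D}(\xi)\subseteq[0,1]$ denotes the set of all duration-bounds of $\xi$ and $\mathcal{F}(\xi)\subseteq[0,+\infty]$ the set of all frequency-bounds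 of $\xi$. *)

theory Defs
  imports "HOL-Analysis.Analysis"
begin

text \<open>A DoS sequence with m elements (m :: enat, possibly infinite), indexed from 0:
  element n (for enat n < m) is H_n = {h n} \<union> [h n, h n + tau n).\<close>

definition is_DoS :: "enat \<Rightarrow> (nat \<Rightarrow> real) \<Rightarrow> (nat \<Rightarrow> real) \<Rightarrow> bool" where
  "is_DoS m h tau \<longleftrightarrow>
     (0 < m \<longrightarrow> 0 \<le> h 0) \<and>
     (\<forall>n. enat n < m \<longrightarrow> 0 \<le> tau n) \<and>
     (\<forall>n. enat (Suc n) < m \<longrightarrow> h n + tau n < h (Suc n))"

definition DoS_H :: "(nat \<Rightarrow> real) \<Rightarrow> (nat \<Rightarrow> real) \<Rightarrow> nat \<Rightarrow> real set" where
  "DoS_H h tau n = {h n} \<union> {h n..<h n + tau n}"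

definition DoS_Xi :: "enat \<Rightarrow> (nat \<Rightarrow> real) \<Rightarrow> (nat \<Rightarrow> real) \<Rightarrow> real \<Rightarrow> real \<Rightarrow> real set" where
  "DoS_Xi m h tau a s = (\<Union>n\<in>{n. enat n < m}. DoS_H h tau n) \<inter> {a..s}"

definition DoS_n :: "enat \<Rightarrow> (nat \<Rightarrow> real) \<Rightarrow> (nat \<Rightarrow> real) \<Rightarrow> real \<Rightarrow> real \<Rightarrow> ereal" where
  "DoS_n m h tau a s =
     (let S = {h n | n. enat n < m} \<inter> {a..s} in if finite S then ereal (real (card S)) else \<infinity>)"

definition duration_bound :: "enat \<Rightarrow> (nat \<Rightarrow> real) \<Rightarrow> (nat \<Rightarrow> real) \<Rightarrow> real \<Rightarrow> bool" where
  "duration_bound m h tau B \<longleftrightarrow> 0 \<le> B \<and> B \<le> 1 \<and>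
     (\<exists>\<kappa>::real. 0 < \<kappa> \<and> (\<forall>t\<ge>0. measure lborel (DoS_Xi m h tau 0 t) \<le> \<kappa> + B * t))"

definition finite_frequency_bound :: "enat \<Rightarrow> (nat \<Rightarrow> real) \<Rightarrow> (nat \<Rightarrow> real) \<Rightarrow> real \<Rightarrow> bool" where
  "finite_frequency_bound m h tau B \<longleftrightarrow> 0 \<le> B \<and>
     (\<exists>\<Lambda>::nat. 0 < \<Lambda> \<and> (\<forall>t\<ge>0. DoS_n m h tau 0 t \<le> ereal (real \<Lambda> + B * t)))"

definition DoS_D :: "enat \<Rightarrow> (nat \<Rightarrow> real) \<Rightarrow> (nat \<Rightarrow> real) \<Rightarrow> real set" where
  "DoS_D m h tau = {B. duration_bound m h tau B}"

definition DoS_F :: "enat \<Rightarrow> (nat \<Rightarrow> real) \<Rightarrow> (nat \<Rightarrow> real) \<Rightarrow> ereal set" where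
  "DoS_F m h tau = (if \<exists>B. finite_frequency_bound m h tau B
                    then ereal ` {B. finite_frequency_bound m h tau B} else {\<infinity>})"

end

theory Submission
  imports Defs
begin

text \<open>Both kinds of bounds are upward closed: enlarging B preserves the defining linear
  inequality. Hence the duration-bounds form an interval from their infimum up to 1 that contains 1,
  and the frequency-bounds, read as extended reals, form an interval from their infimum up to, but
  excluding, \<open>\<infinity>\<close> (or the set \<open>{\<infinity>}\<close>, whose interior is empty). In a dense linear order the
  interior of such an interval is the open interval between its endpoints.\<close>

lemma interior_eq_greaterThanLessThan_Inf:
  fixes S :: "'a::{conditionally_complete_linorder, dense_linorder, linorder_topology} set"
  assumes "S \<noteq> {}" and "bdd_below S" and "c < Inf S"
    and "S \<subseteq> {..b}" and "b \<notin> interior S"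
    and up: "\<And>x y. x \<in> S \<Longrightarrow> x \<le> y \<Longrightarrow> y < b \<Longrightarrow> y \<in> S"
  shows "interior S = {Inf S<..<b}"
proof (rule subset_antisym)
  have "interior S \<subseteq> interior {Inf S..}"
    using cInf_lower[OF _ \<open>bdd_below S\<close>] by (intro interior_mono) auto
  also have "\<dots> = {Inf S<..}"
    using \<open>c < Inf S\<close> by (rule interior_Ici)
  finally show "interior S \<subseteq> {Inf S<..<b}"
    using interior_subset[of S] \<open>S \<subseteq> {..b}\<close> \<open>b \<notin> interior S\<close>
    by (auto simp: subset_iff order.strict_iff_order)
next
  have "{Inf S<..<b} \<subseteq> S"
  proof
    fix y assume y: "y \<in> {Inf S<..<b}"
    then obtain x where "x \<in> S" "x < y"
      using cInf_less_iff[OF \<open>S \<noteq> {}\<close> \<open>bdd_below S\<close>] by auto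
    with y show "y \<in> S"
      using up by auto
  qed
  then show "{Inf S<..<b} \<subseteq> interior S"
    by (intro interior_maximal) auto
qed

lemma measure_DoS_Xi_le:
  assumes "0 \<le> t"
  shows "measure lborel (DoS_Xi m h tau 0 t) \<le> t"
proof (cases "DoS_Xi m h tau 0 t \<in> sets lborel")
  case True
  have "DoS_Xi m h tau 0 t \<subseteq> {0..t}"
    by (auto simp: DoS_Xi_def)
  then have "measure lborel (DoS_Xi m h tau 0 t) \<le> measure lborel {0..t}"
    using True assms by (intro measure_mono_fmeasurable) (auto simp: fmeasurable_def)
  then show ?thesis
    using assms by simp
next
  case False
  then show ?thesis
    using assms by (simp add: measure_notin_sets)
qed

lemma duration_bound_one: "duration_bound m h tau 1"
  unfolding duration_bound_def
  by (auto intro!: exI[of _ 1] order_trans[OF measure_DoS_Xi_le])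

lemma duration_bound_mono:
  assumes "duration_bound m h tau B" and "B \<le> B'" and "B' \<le> 1"
  shows "duration_bound m h tau B'"
proof -
  obtain \<kappa> where "0 < \<kappa>" and bound: "\<forall>t\<ge>0. measure lborel (DoS_Xi m h tau 0 t) \<le> \<kappa> + B * t"
    using assms(1) by (auto simp: duration_bound_def)
  have "\<kappa> + B * t \<le> \<kappa> + B' * t" if "0 \<le> t" for t
    using \<open>B \<le> B'\<close> that by (simp add: mult_right_mono)
  with bound \<open>0 < \<kappa>\<close> assms show ?thesis
    unfolding duration_bound_def by (meson order_trans)
qed

lemma finite_frequency_bound_mono:
  assumes "finite_frequency_bound m h tau B" and "B \<le> B'"
  shows "finite_frequency_bound m h tau B'"
proof -
  obtain \<Lambda> :: nat where "0 < \<Lambda>" and bound: "\<forall>t\<ge>0. DoS_n m h tau 0 t \<le> ereal (real \<Lambda> + B * t)"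
    using assms(1) by (auto simp: finite_frequency_bound_def)
  have "ereal (real \<Lambda> + B * t) \<le> ereal (real \<Lambda> + B' * t)" if "0 \<le> t" for t
    using \<open>B \<le> B'\<close> that by (simp add: mult_right_mono)
  with bound \<open>0 < \<Lambda>\<close> assms show ?thesis
    unfolding finite_frequency_bound_def by (meson order_trans)
qed

lemma interior_DoS_D:
  "interior (DoS_D m h tau) = {Inf (DoS_D m h tau)<..<1}"
proof -
  let ?D = "DoS_D m h tau"
  have D_bounds: "?D \<subseteq> {0..1}"
    by (auto simp: DoS_D_def duration_bound_def)
  have "1 \<in> ?D"
    by (simp add: DoS_D_def duration_bound_one)
  have "interior ?D \<subseteq> interior {..1::real}"
    using D_bounds by (intro interior_mono) auto
  then have "1 \<notin> interior ?D"
    using interior_Iic[of 1 2] by auto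
  moreover have "0 \<le> Inf ?D"
    using D_bounds \<open>1 \<in> ?D\<close> by (intro cInf_greatest) auto
  moreover have "bdd_below ?D"
    using D_bounds by (intro bdd_belowI[of _ 0]) auto
  ultimately show ?thesis
    using D_bounds \<open>1 \<in> ?D\<close>
    by (intro interior_eq_greaterThanLessThan_Inf[where c = "-1"])
       (auto simp: DoS_D_def intro: duration_bound_mono)
qed

lemma interior_DoS_F:
  "interior (DoS_F m h tau) = {Inf (DoS_F m h tau)<..<\<infinity>}"
proof (cases "\<exists>B. finite_frequency_bound m h tau B")
  case False
  then show ?thesis
    by (simp add: DoS_F_def)
next
  case True
  let ?R = "{B. finite_frequency_bound m h tau B}"
  have "0 \<le> Inf (ereal ` ?R)"
    by (intro Inf_greatest) (auto simp: finite_frequency_bound_def)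
  then have "-1 < Inf (ereal ` ?R)"
    by (rule less_le_trans[rotated]) simp
  moreover have "y \<in> ereal ` ?R" if x: "x \<in> ereal ` ?R" and "x \<le> y" and "y < \<infinity>" for x y
  proof -
    obtain B where "x = ereal B" and "B \<in> ?R"
      using x by blast
    moreover obtain B' where "y = ereal B'"
      using \<open>x \<le> y\<close> \<open>y < \<infinity>\<close> \<open>x = ereal B\<close> by (cases y) auto
    ultimately show ?thesis
      using \<open>x \<le> y\<close> finite_frequency_bound_mono by auto
  qed
  moreover have "\<infinity> \<notin> interior (ereal ` ?R)"
    using interior_subset by fastforce
  ultimately have "interior (ereal ` ?R) = {Inf (ereal ` ?R)<..<\<infinity>}"
    using True by (intro interior_eq_greaterThanLessThan_Inf[where c = "-1"]) auto
  then show ?thesis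
    using True by (simp add: DoS_F_def)
qed

theorem proposition1:
  fixes m :: enat and h tau :: "nat \<Rightarrow> real"
  assumes "is_DoS m h tau"
  shows "interior (DoS_D m h tau) = {Inf (DoS_D m h tau)<..<1}
       \<and> interior (DoS_F m h tau) = {Inf (DoS_F m h tau)<..<\<infinity>}"
  using interior_DoS_D interior_DoS_F by blast

end
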